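(* Let $n\ge1$, $\varepsilon\in D$, $s\in D^n$, and let $n'$ be the index produced by the recursive construction below. Then $L_n=n'+1-L_{n'}$ (with the convention $L_{-1}=0$).
   Context: Let $D$ be a commutative integral domain with $1\neq 0$. For $s=(s_1,\dots,s_n)\in D^n$ put $\underline{s}=s_1x^{-1}+\cdots+s_nx^{-n}\in D[x,x^{-1}]$; for a Laurent polynomial $F$, $F_k$ is the coefficient of $x^k$; $s^{(i)}=(s_1,\dots,s_i)$. A polynomial $f\in D[x]$ is an annihilator of $s$ if $f=0$, or $d=\deg f\ge0$ and $(f\cdot\underline{s})_{d-j}=0$ for $d+1\le j\le n$. $L(s)$ is the least degree of a nonzero annihilator of $s$, $L_j=L(s^{(j)})$, $L_0=0$. For nonzero $f\in D[x]$ and $t\in D^m$, $\Delta(f,t)=(f\cdot\underline{t})_{\deg f-m}$. Recursive construction (relative to a fixed $\varepsilon\in D$): put $\mu^{(-1)}=\varepsilon$, $\mu^{(0)}=1$, $\Delta_0=1$, $0'=-1$, and for $j\ge 0$ let $e_j=j+1-2\deg\mu^{(j)}$ (so $e_0=1$). For $j=1,\dots,n$ successively define: $\Delta_j=\Delta(\mu^{(j-1)},s^{(j)})$; the index $j'=(j-1)'$ if $\Delta_j=0$ or $e_{j-1}\le 0$, and $j'=j-1$ if $\Delta_j\neq0$ and $e_{j-1}>0$; $\Delta'_j=\Delta_{(j-1)'+1}$; and $\mu^{(j)}=\mu^{(j-1)}$ if $\Delta_j=0$, otherwise $\mu^{(j)}=\Delta'_j\,x^{\max\{e_{j-1},0\}}\mu^{(j-1)}-\Delta_j\,x^{\max\{-e_{j-1},0\}}\mu^{((j-1)')}$.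 *)

theory Defs
  imports "HOL-Computational_Algebra.Polynomial"
begin

text \<open>A sequence s = (s_1,...,s_m) in D^m is represented by a function
  s :: nat => 'a together with its length m; only s 1, ..., s m are used.
  Hence the prefix s^(i) is represented by the same function with length i.\<close>

text \<open>Coefficient of x^k in the Laurent polynomial f * (s_1 x^-1 + ... + s_m x^-m).\<close>
definition lcoeff :: "'a::idom poly \<Rightarrow> (nat \<Rightarrow> 'a) \<Rightarrow> nat \<Rightarrow> int \<Rightarrow> 'a" where
  "lcoeff f s m k = (\<Sum>i\<in>{0..degree f}. \<Sum>l\<in>{1..m}.
       if int i - int l = k then coeff f i * s l else 0)"

definition annihilator :: "'a::idom poly \<Rightarrow> (nat \<Rightarrow> 'a) \<Rightarrow> nat \<Rightarrow> bool" where
  "annihilator f s m \<longleftrightarrow> f = 0 \<or>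
     (\<forall>j. degree f + 1 \<le> j \<and> j \<le> m \<longrightarrow> lcoeff f s m (int (degree f) - int j) = 0)"

definition LC :: "(nat \<Rightarrow> 'a::idom) \<Rightarrow> nat \<Rightarrow> nat" where
  "LC s m = (LEAST d. \<exists>f. f \<noteq> 0 \<and> degree f = d \<and> annihilator f s m)"

definition Delta :: "'a::idom poly \<Rightarrow> (nat \<Rightarrow> 'a) \<Rightarrow> nat \<Rightarrow> 'a" where
  "Delta f s m = lcoeff f s m (int (degree f) - int m)"

text \<open>State after step j of the recursive construction:
  (mu^(j), j', mu^(j'), Delta_{j'+1}).  Initial state j = 0:
  (mu^(0) = 1, 0' = -1, mu^(-1) = eps, Delta_0 = 1).\<close>
fun lfsr_state :: "'a::idom \<Rightarrow> (nat \<Rightarrow> 'a) \<Rightarrow> nat \<Rightarrow> 'a poly \<times> int \<times> 'a poly \<times> 'a" where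
  "lfsr_state eps s 0 = (1, -1, [:eps:], 1)"
| "lfsr_state eps s (Suc j) =
    (let (mu, jp, mujp, dp) = lfsr_state eps s j;
         \<Delta> = Delta mu s (Suc j);
         e = int (Suc j) - 2 * int (degree mu);
         keep = (\<Delta> = 0 \<or> e \<le> 0);
         mu' = (if \<Delta> = 0 then mu
                else smult dp (monom 1 (nat (max e 0)) * mu)
                     - smult \<Delta> (monom 1 (nat (max (- e) 0)) * mujp))
     in (mu', (if keep then jp else int j), (if keep then mujp else mu),
         (if keep then dp else \<Delta>)))"

definition mu :: "'a::idom \<Rightarrow> (nat \<Rightarrow> 'a) \<Rightarrow> nat \<Rightarrow> 'a poly" where
  "mu eps s j = fst (lfsr_state eps s j)"

definition jprime :: "'a::idom \<Rightarrow> (nat \<Rightarrow> 'a) \<Rightarrow> nat \<Rightarrow> int" where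
  "jprime eps s j = fst (snd (lfsr_state eps s j))"

definition LCi :: "(nat \<Rightarrow> 'a::idom) \<Rightarrow> int \<Rightarrow> int" where
  "LCi s k = (if k < 0 then 0 else int (LC s (nat k)))"

end

theory Submission
  imports Defs
begin

(* The theorem is the length-change rule of the Berlekamp-Massey
   construction.  We show by induction on j that the state after step j satisfies
   an invariant: mu^(j) is a minimal (nonzero, least-degree) annihilator of s^(j),
   and the stored triple (j', mu^(j'), Delta'_j) records the last length change,
   i.e. either j' = -1 with mu^(-1) = eps and Delta' = 1, or mu^(j') is a minimal
   annihilator of s^(j') whose discrepancy at position j'+1 is Delta' <> 0;
   moreover L_j = j' + 1 - L_(j').  The update polynomial of the construction attains this bound, which
   yields the step of the invariant; the theorem is the invariant at j = n. *)

section \<open>Coefficients of the Laurent product f * s\<close>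

text \<open>The inner sum over l picks out the single index l = i - k.\<close>
lemma lcoeff_closed_form:
  "lcoeff f s m k = (\<Sum>i\<in>{0..degree f}.
     if 1 \<le> int i - k \<and> int i - k \<le> int m then coeff f i * s (nat (int i - k)) else 0)"
proof -
  have "(\<Sum>l\<in>{1..m}. if int i - int l = k then c * s l else 0) =
        (if 1 \<le> int i - k \<and> int i - k \<le> int m then c * s (nat (int i - k)) else 0)"
    for i and c :: 'a
  proof -
    have "(\<Sum>l\<in>{1..m}. if int i - int l = k then c * s l else 0) =
          (\<Sum>l\<in>{1..m}. if l = nat (int i - k) then (if 0 \<le> int i - k then c * s l else 0) else 0)"
      by (rule sum.cong) auto
    then show ?thesis by auto
  qed
  then show ?thesis unfolding lcoeff_def by (intro sum.cong) auto
qed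

lemma lcoeff_upto:
  assumes "degree f \<le> N"
  shows "lcoeff f s m k = (\<Sum>i\<in>{0..N}.
     if 1 \<le> int i - k \<and> int i - k \<le> int m then coeff f i * s (nat (int i - k)) else 0)"
  unfolding lcoeff_closed_form
  by (rule sum.mono_neutral_left) (use assms in \<open>auto simp: coeff_eq_0\<close>)

lemma lcoeff_diff: "lcoeff (f - g) s m k = lcoeff f s m k - lcoeff g s m k"
proof -
  have deg: "degree (f - g) \<le> max (degree f) (degree g)"
    "degree f \<le> max (degree f) (degree g)" "degree g \<le> max (degree f) (degree g)"
    by (simp_all add: degree_diff_le_max)
  show ?thesis
    unfolding lcoeff_upto[OF deg(1)] lcoeff_upto[OF deg(2)] lcoeff_upto[OF deg(3)]
    by (simp add: sum_subtractf[symmetric] algebra_simps if_distrib cong: if_cong)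
qed

lemma lcoeff_smult: "lcoeff (smult c f) s m k = c * lcoeff f s m k"
  unfolding lcoeff_upto[OF degree_smult_le, of c f] lcoeff_closed_form[of f]
  by (simp add: sum_distrib_left algebra_simps if_distrib cong: if_cong)

lemma lcoeff_monom_mult: "lcoeff (monom 1 t * f) s m k = lcoeff f s m (k - int t)"
proof -
  have deg: "degree (monom 1 t * f) \<le> degree f + t"
    by (metis add.commute degree_monom_le degree_mult_le le_refl add_le_mono order_trans)
  define h where "h i = (if 1 \<le> int i - k \<and> int i - k \<le> int m
                         then coeff (monom 1 t * f) i * s (nat (int i - k)) else 0)" for i
  have "lcoeff (monom 1 t * f) s m k = sum h {0..degree f + t}"
    unfolding lcoeff_upto[OF deg] h_def ..
  also have "\<dots> = sum h {t..degree f + t}"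
    by (rule sum.mono_neutral_right) (auto simp: h_def coeff_monom_mult)
  also have "\<dots> = sum (\<lambda>i. h (i + t)) {0..degree f}"
    using sum.shift_bounds_cl_nat_ivl[of h 0 t "degree f"] by simp
  also have "\<dots> = lcoeff f s m (k - int t)"
  proof -
    have "coeff (monom 1 t * f) (i + t) = coeff f i" for i
      by (simp only: coeff_monom_mult) simp
    then show ?thesis unfolding lcoeff_closed_form h_def
      by (intro sum.cong) (auto simp: algebra_simps)
  qed
  finally show ?thesis .
qed

text \<open>A coefficient only involves s_1, ..., s_(deg f - k); a longer sequence
  does not change it.\<close>
lemma lcoeff_length_indep:
  assumes "int (degree f) - k \<le> int m" "m \<le> m'"
  shows "lcoeff f s m k = lcoeff f s m' k"
  unfolding lcoeff_closed_form using assms by (intro sum.cong) auto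

lemma lcoeff_window:
  assumes "degree f < k" "k \<le> m"
  shows "lcoeff f s m (int (degree f) - int k) =
         (\<Sum>i\<le>degree f. coeff f i * s (i + k - degree f))"
proof -
  have "nat (int i - (int (degree f) - int k)) = i + k - degree f" for i
    using assms by auto
  then show ?thesis unfolding lcoeff_closed_form using assms
    by (intro sum.cong) (auto simp: atLeast0AtMost)
qed

section \<open>Annihilators and the linear complexity L\<close>

definition minimal_annihilator :: "'a::idom poly \<Rightarrow> (nat \<Rightarrow> 'a) \<Rightarrow> nat \<Rightarrow> bool" where
  "minimal_annihilator f s m \<longleftrightarrow> f \<noteq> 0 \<and> annihilator f s m \<and> degree f = LC s m"

lemma annihilator_prefix:
  assumes "annihilator f s m'" "m \<le> m'"
  shows "annihilator f s m"
proof (cases "f = 0")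
  case False
  have "lcoeff f s m (int (degree f) - int j) = 0" if "degree f + 1 \<le> j" "j \<le> m" for j
  proof -
    have "lcoeff f s m (int (degree f) - int j) = lcoeff f s m' (int (degree f) - int j)"
      by (rule lcoeff_length_indep) (use that assms in auto)
    then show ?thesis using assms False that unfolding annihilator_def by auto
  qed
  then show ?thesis unfolding annihilator_def by auto
qed (simp add: annihilator_def)

lemma annihilator_window:
  assumes "annihilator f s m" "f \<noteq> 0" "degree f < k" "k \<le> Suc m" "Suc m \<le> M"
  shows "lcoeff f s M (int (degree f) - int k) = (if k = Suc m then Delta f s (Suc m) else 0)"
proof (cases "k = Suc m")
  case True
  then show ?thesis unfolding Delta_def using assms
    by (simp add: lcoeff_length_indep[of f _ "Suc m" M])
next
  case False
  then have "k \<le> m" using assms by simp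
  then have "lcoeff f s M (int (degree f) - int k) = lcoeff f s m (int (degree f) - int k)"
    using assms by (intro lcoeff_length_indep[symmetric]) auto
  also have "\<dots> = 0" using assms \<open>k \<le> m\<close> unfolding annihilator_def by auto
  finally show ?thesis using False by simp
qed

lemma annihilator_convolution:
  assumes "annihilator f s m" "f \<noteq> 0" "degree f < k" "k \<le> m"
  shows "(\<Sum>i\<le>degree f. coeff f i * s (i + k - degree f)) = 0"
  using assms lcoeff_window[of f k m s] unfolding annihilator_def by auto

lemma annihilator_Suc:
  assumes "annihilator f s j" "f \<noteq> 0" "Delta f s (Suc j) = 0"
  shows "annihilator f s (Suc j)"
  using assms annihilator_window[OF assms(1,2), of _ "Suc j"] unfolding annihilator_def by auto

lemma LC_le: "f \<noteq> 0 \<Longrightarrow> annihilator f s m \<Longrightarrow> LC s m \<le> degree f"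
  unfolding LC_def by (rule Least_le) blast

text \<open>The least degree is attained; x^m annihilates s^(m) vacuously.\<close>
lemma minimal_annihilator_exists: "\<exists>f. minimal_annihilator f s m"
proof -
  have "monom (1::'a) m \<noteq> 0 \<and> degree (monom (1::'a) m) = m \<and> annihilator (monom 1 m) s m"
    by (auto simp: annihilator_def degree_monom_eq)
  then have "\<exists>d f. f \<noteq> 0 \<and> degree f = d \<and> annihilator f s m" by blast
  from LeastI_ex[OF this] show ?thesis unfolding LC_def minimal_annihilator_def by blast
qed

lemma LC_0: "LC s 0 = 0"
proof -
  have "annihilator (1::'a::idom poly) s 0" by (simp add: annihilator_def)
  from LC_le[OF _ this] show ?thesis by simp
qed

lemma LC_mono: "m \<le> m' \<Longrightarrow> LC s m \<le> LC s m'"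
  using minimal_annihilator_exists[of s m'] LC_le annihilator_prefix
  unfolding minimal_annihilator_def by metis

section \<open>Massey's lemma and the length-change rule\<close>

text \<open>Otherwise the double sum
  of f_a g_b s_(a+b+M+1-d-e) vanishes when summed over b first (g annihilates),
  but equals g_e times the discrepancy when summed over a first.\<close>
lemma massey:
  assumes f: "annihilator f s M" "Delta f s (Suc M) \<noteq> 0"
    and g: "annihilator g s (Suc M)" "g \<noteq> 0"
  shows "Suc M \<le> degree f + degree g"
proof (rule ccontr)
  assume "\<not> ?thesis"
  then have lt: "degree f + degree g < Suc M" by simp
  define d where "d = degree f"
  define e where "e = degree g"
  have f0: "f \<noteq> 0" using f(2) unfolding Delta_def lcoeff_def by auto
  define T where "T = (\<Sum>a\<le>d. \<Sum>b\<le>e. coeff f a * coeff g b * s (a + b + Suc M - d - e))"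
  have "T = (\<Sum>a\<le>d. coeff f a * (\<Sum>b\<le>e. coeff g b * s (b + (a + Suc M - d) - e)))"
    unfolding T_def sum_distrib_left
    by (intro sum.cong refl) (use lt in \<open>auto simp: d_def e_def algebra_simps\<close>)
  also have "\<dots> = 0"
  proof -
    have "(\<Sum>b\<le>e. coeff g b * s (b + (a + Suc M - d) - e)) = 0" if "a \<le> d" for a
      using annihilator_convolution[OF g(1,2), of "a + Suc M - d"] that lt
      by (simp add: d_def e_def)
    then show ?thesis by simp
  qed
  finally have T0: "T = 0" .
  have "T = (\<Sum>b\<le>e. coeff g b * (\<Sum>a\<le>d. coeff f a * s (a + (b + Suc M - e) - d)))"
    unfolding T_def sum_distrib_left
    by (subst sum.swap) (intro sum.cong refl, use lt in \<open>auto simp: d_def e_def algebra_simps\<close>)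
  also have "\<dots> = coeff g e * (\<Sum>a\<le>d. coeff f a * s (a + Suc M - d))"
  proof -
    have "(\<Sum>a\<le>d. coeff f a * s (a + (b + Suc M - e) - d)) = 0" if "b < e" for b
      using annihilator_convolution[OF f(1) f0, of "b + Suc M - e"] that lt by (simp add: d_def e_def)
    moreover have "{..e} = insert e {..<e}" by auto
    ultimately show ?thesis by simp
  qed
  also have "(\<Sum>a\<le>d. coeff f a * s (a + Suc M - d)) = Delta f s (Suc M)"
    unfolding Delta_def d_def by (rule lcoeff_window[symmetric]) (use lt in auto)
  finally have "coeff g e * Delta f s (Suc M) = 0" using T0 by simp
  moreover have "coeff g e \<noteq> 0" using g(2) unfolding e_def by simp
  ultimately show False using f(2) by simp
qed

lemma LC_Suc_lower_bound:
  assumes "minimal_annihilator u s j" "Delta u s (Suc j) \<noteq> 0"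
  shows "max (LC s j) (Suc j - LC s j) \<le> LC s (Suc j)"
proof -
  obtain g where g: "minimal_annihilator g s (Suc j)"
    using minimal_annihilator_exists by blast
  have "Suc j \<le> LC s j + LC s (Suc j)"
    using massey[of u s j g] assms g unfolding minimal_annihilator_def by auto
  then show ?thesis using LC_mono[of j "Suc j" s] by simp
qed

lemma minimal_annihilator_Suc:
  assumes "minimal_annihilator u s j" "Delta u s (Suc j) = 0"
  shows "minimal_annihilator u s (Suc j)"
proof -
  have ann: "annihilator u s (Suc j)"
    using annihilator_Suc assms unfolding minimal_annihilator_def by blast
  have "LC s (Suc j) \<le> LC s j"
    using LC_le[OF _ ann] assms unfolding minimal_annihilator_def by simp
  then show ?thesis using LC_mono[of j "Suc j" s] ann assms
    unfolding minimal_annihilator_def by simp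
qed

section \<open>The update polynomial\<close>

lemma update_window_vanishes:
  assumes u: "annihilator u s j" "u \<noteq> 0" "Delta u s (Suc j) = \<Delta>"
    and w: "annihilator w s p" "w \<noteq> 0" "Delta w s (Suc p) = dp" "p < j"
    and align: "a + degree u = b + degree w + (j - p)"
    and k: "a + degree u < k" "k \<le> Suc j"
  shows "lcoeff (smult dp (monom 1 a * u) - smult \<Delta> (monom 1 b * w)) s (Suc j)
           (int (a + degree u) - int k) = 0"
proof -
  define k' where "k' = k - (j - p)"
  have k': "degree w < k'" "k' \<le> Suc p" "int (a + degree u) - int k - int b = int (degree w) - int k'"
    "k' = Suc p \<longleftrightarrow> k = Suc j"
    using align k w(4) unfolding k'_def by linarith+
  have "lcoeff u s (Suc j) (int (degree u) - int k) = (if k = Suc j then \<Delta> else 0)"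
    using annihilator_window[OF u(1,2), of k "Suc j"] k u(3) by auto
  moreover have "lcoeff w s (Suc j) (int (degree w) - int k') = (if k = Suc j then dp else 0)"
    using annihilator_window[OF w(1,2), of k' "Suc j"] k' w by auto
  moreover have "int (a + degree u) - int k - int a = int (degree u) - int k" by simp
  ultimately show ?thesis
    unfolding lcoeff_diff lcoeff_smult lcoeff_monom_mult k'(3) by (simp add: mult.commute)
qed

text \<open>Degree of the update: the first term dominates.\<close>
lemma update_degree:
  fixes u w :: "'a::idom poly"
  assumes "dp \<noteq> 0" "u \<noteq> 0" "b + degree w < a + degree u"
  shows "degree (smult dp (monom 1 a * u) - smult \<Delta> (monom 1 b * w)) = a + degree u"
proof -
  have lead: "degree (smult dp (monom 1 a * u)) = a + degree u"
    using assms by (simp add: degree_mult_eq degree_monom_eq)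
  have "degree (smult \<Delta> (monom 1 b * w)) \<le> degree (monom 1 b * w)"
    by (rule degree_smult_le)
  also have "\<dots> \<le> b + degree w"
    using degree_mult_le[of "monom 1 b" w] degree_monom_le[of "1::'a" b] by linarith
  finally have "degree (- smult \<Delta> (monom 1 b * w)) < degree (smult dp (monom 1 a * u))"
    using lead assms(3) by simp
  then have "degree (smult dp (monom 1 a * u) + - smult \<Delta> (monom 1 b * w)) = a + degree u"
    unfolding lead[symmetric] by (rule degree_add_eq_left)
  then show ?thesis by simp
qed

section \<open>The invariant of the construction\<close>

text \<open>The stored triple (j', mu^(j'), Delta') records the last length change.\<close>
definition last_change :: "'a::idom \<Rightarrow> (nat \<Rightarrow> 'a) \<Rightarrow> int \<Rightarrow> 'a poly \<Rightarrow> 'a \<Rightarrow> bool" where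
  "last_change eps s jp w dp \<longleftrightarrow>
     (jp = -1 \<and> w = [:eps:] \<and> dp = 1) \<or>
     (0 \<le> jp \<and> minimal_annihilator w s (nat jp) \<and> Delta w s (Suc (nat jp)) = dp \<and> dp \<noteq> 0)"

definition lfsr_invariant :: "'a::idom \<Rightarrow> (nat \<Rightarrow> 'a) \<Rightarrow> nat \<Rightarrow> bool" where
  "lfsr_invariant eps s j \<longleftrightarrow> (case lfsr_state eps s j of (u, jp, w, dp) \<Rightarrow>
     minimal_annihilator u s j \<and> jp < int j \<and> last_change eps s jp w dp \<and>
     int (LC s j) = jp + 1 - LCi s jp)"

text \<open>The update polynomial has degree max(L_j, j+1-L_j) and annihilates s^(j+1):
  in the first construction step (j' = -1) the window is empty, otherwise the
  two discrepancies cancel by update_window_vanishes.\<close>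
lemma update_annihilator:
  assumes u: "minimal_annihilator u s j" "Delta u s (Suc j) = \<Delta>"
    and last: "last_change eps s jp w dp" "jp < int j" "int (LC s j) = jp + 1 - LCi s jp"
    and e: "e = int (Suc j) - 2 * int (degree u)" "a = nat (max e 0)" "b = nat (max (- e) 0)"
  defines "v \<equiv> smult dp (monom 1 a * u) - smult \<Delta> (monom 1 b * w)"
  shows "degree v = max (LC s j) (Suc j - LC s j)" "annihilator v s (Suc j)"
proof -
  have u': "u \<noteq> 0" "annihilator u s j" "degree u = LC s j"
    using u(1) unfolding minimal_annihilator_def by auto
  have size: "a + degree u = max (LC s j) (Suc j - LC s j)"
    using e u'(3) by auto
  have "degree v = a + degree u \<and> annihilator v s (Suc j)"
    using last(1) unfolding last_change_def
  proof (elim disjE conjE)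
    assume "jp = -1" "w = [:eps:]" "dp = 1"
    moreover then have "a = Suc j" "b = 0" using last(3) e u'(3) by (auto simp: LCi_def)
    ultimately have deg: "degree v = a + degree u"
      unfolding v_def using u' by (intro update_degree) auto
    then show ?thesis unfolding annihilator_def using \<open>a = Suc j\<close> by auto
  next
    assume w: "0 \<le> jp" "minimal_annihilator w s (nat jp)" "Delta w s (Suc (nat jp)) = dp" "dp \<noteq> 0"
    have ab: "int a = max e 0" "int b = max (- e) 0" using e(2,3) by auto
    have "int (a + degree u) = int (b + degree w + (j - nat jp))"
      using ab e(1) w(1,2) last(2,3) u'(3)
      by (simp add: minimal_annihilator_def LCi_def max_def)
    then have align: "a + degree u = b + degree w + (j - nat jp)" by (simp only: of_nat_eq_iff)
    have deg: "degree v = a + degree u"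
      unfolding v_def using u' w align last(2)
      by (intro update_degree) (auto simp: minimal_annihilator_def)
    have "annihilator v s (Suc j)" unfolding annihilator_def deg
      using update_window_vanishes[OF u'(2,1) u(2) _ _ w(3) _ align] w last(2)
      unfolding v_def minimal_annihilator_def by auto
    with deg show ?thesis ..
  qed
  then show "degree v = max (LC s j) (Suc j - LC s j)" "annihilator v s (Suc j)"
    using size by auto
qed

text \<open>Since the update attains the lower bound of LC_Suc_lower_bound, it is a
  minimal annihilator and L_(j+1) = max(L_j, j+1-L_j).\<close>
lemma update_minimal:
  assumes u: "minimal_annihilator u s j" "Delta u s (Suc j) = \<Delta>" "\<Delta> \<noteq> 0"
    and last: "last_change eps s jp w dp" "jp < int j" "int (LC s j) = jp + 1 - LCi s jp"
    and e: "e = int (Suc j) - 2 * int (degree u)" "a = nat (max e 0)" "b = nat (max (- e) 0)"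
  defines "v \<equiv> smult dp (monom 1 a * u) - smult \<Delta> (monom 1 b * w)"
  shows "minimal_annihilator v s (Suc j)" "LC s (Suc j) = max (LC s j) (Suc j - LC s j)"
proof -
  have deg: "degree v = max (LC s j) (Suc j - LC s j)" and ann: "annihilator v s (Suc j)"
    using update_annihilator[OF u(1,2) last e] unfolding v_def by auto
  have "0 < max (LC s j) (Suc j - LC s j)" by (cases "LC s j") auto
  then have "v \<noteq> 0" using deg by auto
  then have "LC s (Suc j) \<le> max (LC s j) (Suc j - LC s j)"
    using LC_le[OF _ ann] deg by simp
  moreover have "max (LC s j) (Suc j - LC s j) \<le> LC s (Suc j)"
    using LC_Suc_lower_bound[OF u(1)] u(2,3) by simp
  ultimately show LC: "LC s (Suc j) = max (LC s j) (Suc j - LC s j)" by (rule antisym)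
  show "minimal_annihilator v s (Suc j)"
    unfolding minimal_annihilator_def using \<open>v \<noteq> 0\<close> ann deg LC by simp
qed

lemma lfsr_invariant_0: "lfsr_invariant eps s 0"
  unfolding lfsr_invariant_def last_change_def minimal_annihilator_def
  by (simp add: LC_0 LCi_def annihilator_def)

text \<open>With zero discrepancy nothing changes;
  otherwise L jumps to max(L_j, j+1-L_j), and the record is replaced by
  (j, mu^(j), Delta_(j+1)) exactly when L really increases, i.e. when e_j > 0.\<close>
lemma lfsr_invariant_Suc:
  assumes "lfsr_invariant eps s j"
  shows "lfsr_invariant eps s (Suc j)"
proof -
  obtain u jp w dp where st: "lfsr_state eps s j = (u, jp, w, dp)"
    by (cases "lfsr_state eps s j") auto
  have inv: "minimal_annihilator u s j" "jp < int j" "last_change eps s jp w dp"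
    "int (LC s j) = jp + 1 - LCi s jp"
    using assms st unfolding lfsr_invariant_def by auto
  have deg_u: "degree u = LC s j" using inv(1) unfolding minimal_annihilator_def by simp
  define \<Delta> where "\<Delta> = Delta u s (Suc j)"
  define e where "e = int (Suc j) - 2 * int (degree u)"
  define a where "a = nat (max e 0)"
  define b where "b = nat (max (- e) 0)"
  define v where "v = smult dp (monom 1 a * u) - smult \<Delta> (monom 1 b * w)"
  show ?thesis
  proof (cases "\<Delta> = 0")
    case True
    then have "lfsr_state eps s (Suc j) = (u, jp, w, dp)" by (simp add: st \<Delta>_def)
    moreover have "minimal_annihilator u s (Suc j)"
      using minimal_annihilator_Suc inv(1) True \<Delta>_def by simp
    moreover then have "LC s (Suc j) = LC s j"
      using deg_u unfolding minimal_annihilator_def by simp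
    ultimately show ?thesis using inv unfolding lfsr_invariant_def by simp
  next
    case False
    have st': "lfsr_state eps s (Suc j) =
      (v, if e \<le> 0 then jp else int j, if e \<le> 0 then w else u, if e \<le> 0 then dp else \<Delta>)"
      using False by (simp add: st Let_def v_def \<Delta>_def e_def a_def b_def)
    have v: "minimal_annihilator v s (Suc j)" "LC s (Suc j) = max (LC s j) (Suc j - LC s j)"
      using update_minimal[OF inv(1) \<Delta>_def[symmetric] False inv(3,2,4) e_def a_def b_def]
      unfolding v_def by blast+
    show ?thesis
    proof (cases "e \<le> 0")
      case True
      then have "LC s (Suc j) = LC s j" using v(2) deg_u e_def by simp
      then show ?thesis using st' True v(1) inv unfolding lfsr_invariant_def by simp
    next
      case e: False
      then have "LC s (Suc j) = Suc j - LC s j" using v(2) deg_u e_def by simp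
      moreover have "last_change eps s (int j) u \<Delta>"
        using inv(1) False \<Delta>_def unfolding last_change_def by simp
      ultimately show ?thesis using st' e v(1) deg_u e_def
        unfolding lfsr_invariant_def by (simp add: LCi_def)
    qed
  qed
qed

lemma lfsr_invariant: "lfsr_invariant eps s j"
  by (induction j) (auto intro: lfsr_invariant_0 lfsr_invariant_Suc)

theorem mainTheorem6:
  fixes eps :: "'a::idom" and s :: "nat \<Rightarrow> 'a" and n :: nat
  assumes "n \<ge> 1"
  shows "int (LC s n) = jprime eps s n + 1 - LCi s (jprime eps s n)"
  using lfsr_invariant[of eps s n] unfolding lfsr_invariant_def jprime_def
  by (auto split: prod.splits)

end
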